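(* Let $w,s,t$ be positive integers with $t\mid s$ and $t\ne s$. Let $p$ be a prime and $\alpha$ a positive integer with $p^\alpha\mid s/t$ but $p^{\alpha+1}\nmid s/t$. Assume that either $p\ne2$, or $p=2$ and $\alpha>1$. For $l\in I\big(s/(p^\alpha t)\big)$ set $$f(l)=\sum_{k\in\{p^{\alpha-1}l,\;p^{\alpha}l\}}(-1)^{\omega(s/(kt))}(-1)^{ktw}\binom{k(tw-1)-1}{k-1}.$$ Then $f(l)\equiv0\pmod{p^{2\alpha}}$ for every $l\in I\big(s/(p^\alpha t)\big)$.
   Context: For a positive integer $n$, $\omega(n)$ is the number of distinct primes dividing $n$, and $I(n)=\{k\in\mathbb{N}: k\mid n \text{ and } n/k \text{ is square-free}\}$. Binomial coefficients $\binom{n}{m}$ with $n\in\mathbb{Z}$, $m\ge0$ mean $n(n-1)\cdots(n-m+1)/m!$. *)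

theory Defs
  imports "HOL-Computational_Algebra.Computational_Algebra" "HOL-Number_Theory.Number_Theory"
begin

definition omega :: "nat \<Rightarrow> nat" where
  "omega n = card (prime_factors n)"

definition Iset :: "nat \<Rightarrow> nat set" where
  "Iset n = {k. k > 0 \<and> k dvd n \<and> squarefree (n div k)}"

definition ibinom :: "int \<Rightarrow> nat \<Rightarrow> int" where
  "ibinom n m = (\<Prod>i<m. n - int i) div fact m"

end

theory Submission imports Defs "HOL.Binomial_Plus" begin

text \<open>
  Let K = p n and x = K M. Multiplying binom (x - 1) (K - 1) by (K - 1)! gives the product
  of x - j over 0 < j < K. The factors with p | j contribute p^(n-1) times the same product
  for binom (x/p - 1) (n - 1), and likewise for the factorials. The factors prime to p pair
  up as (x - j) (x - (K - j)) \<equiv> j (K - j) mod K^2; this needs p | K/2, which is where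
  "p odd or n even" enters. These factors are units mod p, so the two binomial coefficients
  agree mod p^(2 \<alpha>) once p^\<alpha> | K. In the sum f(l) the two signs differ by exactly one
  factor -1: passing from k to p k removes the prime p from s/(k t), while the parity of
  k t w is unchanged.
\<close>

lemma ibinom_mult_fact: "ibinom a m * fact m = (\<Prod>i<m. a - int i)"
  unfolding ibinom_def using gbinomial_int_mult_fact'[of a m]
  by (simp add: gbinomial_prod_rev atLeast0LessThan)

lemma ibinom_pred_mult_fact:
  "ibinom (x - 1) (K - 1) * fact (K - 1) = (\<Prod>j\<in>{1..<K}. x - int j)"
proof -
  have "ibinom (x - 1) (K - 1) * fact (K - 1) = (\<Prod>i<K - 1. x - 1 - int i)"
    by (rule ibinom_mult_fact)
  also have "\<dots> = (\<Prod>i<K - 1. x - int (Suc i))"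
    by (simp add: algebra_simps)
  also have "\<dots> = (\<Prod>j\<in>{1..<K}. x - int j)"
    by (rule prod.reindex_bij_witness[of _ "\<lambda>j. j - 1" Suc]) auto
  finally show ?thesis .
qed

lemma fact_pred_eq_prod: "(fact (K - 1) :: int) = (\<Prod>j\<in>{1..<K}. int j)"
  by (cases K) (simp_all add: fact_prod of_nat_prod atLeastLessThanSuc_atLeastAtMost)

lemma prod_split_multiples:
  fixes f :: "nat \<Rightarrow> int"
  assumes "p > 0"
  shows "(\<Prod>j\<in>{1..<p*n}. f j) =
           (\<Prod>j\<in>{j\<in>{1..<p*n}. \<not> p dvd j}. f j) * (\<Prod>i\<in>{1..<n}. f (p*i))"
proof -
  have split: "{1..<p*n} = {j\<in>{1..<p*n}. \<not> p dvd j} \<union> (\<lambda>i. p*i) ` {1..<n}"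
  proof (intro equalityI subsetI)
    fix j assume j: "j \<in> {1..<p*n}"
    show "j \<in> {j\<in>{1..<p*n}. \<not> p dvd j} \<union> (\<lambda>i. p*i) ` {1..<n}"
    proof (cases "p dvd j")
      case True
      then obtain i where i: "j = p*i" by blast
      with j assms have "1 \<le> i" "i < n" by (auto simp: mult_less_cancel1)
      with i show ?thesis by auto
    qed (use j in auto)
  qed (use assms in auto)
  have inj: "inj_on (\<lambda>i. p*i) {1..<n}" using assms by (auto simp: inj_on_def)
  have "(\<Prod>j\<in>{1..<p*n}. f j) =
          (\<Prod>j\<in>{j\<in>{1..<p*n}. \<not> p dvd j}. f j) * (\<Prod>j\<in>(\<lambda>i. p*i) ` {1..<n}. f j)"
    by (subst split, rule prod.union_disjoint) auto
  also have "(\<Prod>j\<in>(\<lambda>i. p*i) ` {1..<n}. f j) = (\<Prod>i\<in>{1..<n}. f (p*i))"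
    using prod.reindex[OF inj] by simp
  finally show ?thesis .
qed

lemma prod_pair_complement:
  fixes f :: "nat \<Rightarrow> 'a::comm_monoid_mult"
  assumes "S \<subseteq> {1..<K}" "\<forall>j\<in>S. K - j \<in> S" "\<forall>j\<in>S. 2*j \<noteq> K"
  shows "(\<Prod>j\<in>S. f j) = (\<Prod>j\<in>{j\<in>S. 2*j < K}. f j * f (K - j))"
proof -
  define L where "L = {j\<in>S. 2*j < K}"
  have fin: "finite S" using assms(1) finite_subset by blast
  have split: "S = L \<union> (\<lambda>j. K - j) ` L"
  proof (intro equalityI subsetI)
    fix j assume j: "j \<in> S"
    show "j \<in> L \<union> (\<lambda>j. K - j) ` L"
    proof (cases "2*j < K")
      case False
      with assms j have "K - j \<in> L" "j = K - (K - j)" by (force simp: L_def)+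
      then show ?thesis by blast
    qed (use j in \<open>auto simp: L_def\<close>)
  qed (use assms in \<open>auto simp: L_def\<close>)
  have inj: "inj_on (\<lambda>j. K - j) L" using assms by (auto simp: L_def inj_on_def)
  have "(\<Prod>j\<in>S. f j) = (\<Prod>j\<in>L. f j) * (\<Prod>j\<in>(\<lambda>j. K - j) ` L. f j)"
    by (subst split, rule prod.union_disjoint) (use fin assms in \<open>auto simp: L_def\<close>)
  also have "\<dots> = (\<Prod>j\<in>L. f j * f (K - j))"
    by (simp add: prod.reindex[OF inj] prod.distrib)
  finally show ?thesis
    by (simp add: L_def)
qed

lemma prod_complement_pairs_cong:
  fixes M :: int
  assumes "S \<subseteq> {1..<K}" "\<forall>j\<in>S. K - j \<in> S" "\<forall>j\<in>S. 2*j \<noteq> K"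
  shows "[(\<Prod>j\<in>S. int K * M - int j) = (\<Prod>j\<in>S. int j)] (mod int K ^ 2)"
proof -
  have "[(\<Prod>j\<in>{j\<in>S. 2*j < K}. (int K * M - int j) * (int K * M - int (K - j))) =
         (\<Prod>j\<in>{j\<in>S. 2*j < K}. int j * int (K - j))] (mod int K ^ 2)"
  proof (rule cong_prod)
    fix j assume "j \<in> {j\<in>S. 2*j < K}"
    then have "j \<le> K" by simp
    then have "(int K * M - int j) * (int K * M - int (K - j)) - int j * int (K - j)
                 = int K ^ 2 * (M^2 - M)"
      by (simp add: of_nat_diff power2_eq_square algebra_simps)
    then show "[(int K * M - int j) * (int K * M - int (K - j)) = int j * int (K - j)]
                 (mod int K ^ 2)"
      by (simp add: cong_iff_dvd_diff)
  qed
  then show ?thesis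
    by (simp only: prod_pair_complement[OF assms])
qed

lemma prime_to_p_residues_symmetric:
  fixes p n :: nat
  assumes "prime p" "p \<noteq> 2 \<or> even n"
  defines "S \<equiv> {j\<in>{1..<p*n}. \<not> p dvd j}"
  shows "\<forall>j\<in>S. p*n - j \<in> S" and "\<forall>j\<in>S. 2*j \<noteq> p*n"
proof -
  show "\<forall>j\<in>S. p*n - j \<in> S"
  proof
    fix j assume j: "j \<in> S"
    have "\<not> p dvd p*n - j"
    proof
      assume "p dvd p*n - j"
      then have "p dvd p*n - (p*n - j)" by (simp add: dvd_diff_nat)
      with j show False by (simp add: S_def)
    qed
    with j show "p*n - j \<in> S" by (auto simp: S_def)
  qed
  show "\<forall>j\<in>S. 2*j \<noteq> p*n"
  proof (intro ballI notI)
    fix j assume j: "j \<in> S" and mid: "2*j = p*n"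
    show False
    proof (cases "p = 2")
      case True
      with mid assms(2) j show False by (auto simp: S_def)
    next
      case False
      then have "\<not> p dvd 2"
        using assms(1) primes_dvd_imp_eq two_is_prime_nat by blast
      moreover have "p dvd 2*j" by (simp add: mid)
      ultimately show False
        using j assms(1) prime_dvd_mult_iff by (auto simp: S_def)
    qed
  qed
qed

lemma falling_pred_prime_mult:
  fixes M :: int
  assumes "p > 0"
  shows "(\<Prod>j\<in>{1..<p*n}. int (p*n) * M - int j) =
           (\<Prod>j\<in>{j\<in>{1..<p*n}. \<not> p dvd j}. int (p*n) * M - int j)
           * int p ^ (n - 1) * (\<Prod>i\<in>{1..<n}. int n * M - int i)"
proof -
  have "(\<Prod>i\<in>{1..<n}. int (p*n) * M - int (p*i)) = (\<Prod>i\<in>{1..<n}. int p * (int n * M - int i))"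
    by (simp add: algebra_simps)
  also have "\<dots> = int p ^ (n - 1) * (\<Prod>i\<in>{1..<n}. int n * M - int i)"
    by (simp add: prod.distrib)
  finally show ?thesis
    by (simp only: prod_split_multiples[OF assms] mult.assoc)
qed

lemma fact_pred_prime_mult:
  assumes "p > 0"
  shows "(fact (p*n - 1) :: int) =
           (\<Prod>j\<in>{j\<in>{1..<p*n}. \<not> p dvd j}. int j) * int p ^ (n - 1) * fact (n - 1)"
proof -
  have "(\<Prod>i\<in>{1..<n}. int (p*i)) = int p ^ (n - 1) * (\<Prod>i\<in>{1..<n}. int i)"
    by (simp add: prod.distrib)
  also have "\<dots> = int p ^ (n - 1) * fact (n - 1)"
    by (simp only: fact_pred_eq_prod)
  finally have "(\<Prod>i\<in>{1..<n}. int (p*i)) = int p ^ (n - 1) * fact (n - 1)" .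
  then show ?thesis
    by (simp only: fact_pred_eq_prod[of "p*n"] prod_split_multiples[OF assms] mult.assoc)
qed

theorem ibinom_prime_mult_cong:
  fixes p n a :: nat and M :: int
  assumes p: "prime p" and "n > 0" and "p \<noteq> 2 \<or> even n" and "p ^ a dvd p * n"
  shows "[ibinom (int (p*n) * M - 1) (p*n - 1) = ibinom (int n * M - 1) (n - 1)]
           (mod int p ^ (2*a))"
proof -
  define S where "S = {j\<in>{1..<p*n}. \<not> p dvd j}"
  define A where "A = ibinom (int (p*n) * M - 1) (p*n - 1)"
  define B where "B = ibinom (int n * M - 1) (n - 1)"
  define Q where "Q = (\<Prod>j\<in>S. int j)"
  define P where "P = (\<Prod>j\<in>S. int (p*n) * M - int j)"
  have p0: "p > 0" using p prime_gt_0_nat by blast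
  have "Q * A * (int p ^ (n - 1) * fact (n - 1)) = A * fact (p*n - 1)"
    unfolding fact_pred_prime_mult[OF p0] Q_def S_def by (simp only: ac_simps)
  also have "\<dots> = P * int p ^ (n - 1) * (B * fact (n - 1))"
    by (simp only: A_def B_def ibinom_pred_mult_fact falling_pred_prime_mult[OF p0] P_def S_def)
  finally have QA_PB: "Q * A = P * B"
    using p0 by simp
  have "[P = Q] (mod int (p*n) ^ 2)"
    unfolding P_def Q_def
    by (rule prod_complement_pairs_cong)
       (use prime_to_p_residues_symmetric[OF assms(1,3)] in \<open>auto simp: S_def\<close>)
  moreover have "int p ^ (2*a) dvd int (p*n) ^ 2"
    using assms(4) by (metis dvd_power_same of_nat_dvd_iff of_nat_power power_mult mult.commute)
  ultimately have "[P * B = Q * B] (mod int p ^ (2*a))"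
    using cong_dvd_modulus cong_scalar_right by blast
  then have "[Q * A = Q * B] (mod int p ^ (2*a))"
    by (simp add: QA_PB)
  moreover have "coprime Q (int p)"
    unfolding Q_def
  proof (rule prod_coprime_left)
    fix j assume "j \<in> S"
    then have "coprime p j"
      using p prime_imp_coprime by (auto simp: S_def)
    then show "coprime (int j) (int p)"
      by (simp add: coprime_commute)
  qed
  ultimately show ?thesis
    using cong_mult_lcancel[of Q "int p ^ (2*a)" A B] by (simp add: A_def B_def)
qed

lemma omega_prime_mult:
  assumes "prime p" "q > 0" "\<not> p dvd q"
  shows "omega (p*q) = Suc (omega q)"
proof -
  have "prime_factors (p*q) = insert p (prime_factors q)"
    using assms prime_factors_product[of p q] prime_prime_factors[of p] by auto
  moreover have "p \<notin> prime_factors q" using assms by auto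
  ultimately show ?thesis by (simp add: omega_def)
qed

lemma omega_quotient_pred_power:
  fixes s t p \<alpha> l m :: nat
  assumes "prime p" "\<alpha> > 0" "t > 0" "s = t * p ^ \<alpha> * m" "m > 0" "\<not> p dvd m" "l dvd m" "l > 0"
  shows "omega (s div (p ^ (\<alpha> - 1) * l * t)) = Suc (omega (s div (p ^ \<alpha> * l * t)))"
proof -
  obtain q where m: "m = l * q" using assms(7) by blast
  have "q > 0" "\<not> p dvd q" using m assms(5,6) by auto
  have pow: "p ^ \<alpha> = p * p ^ (\<alpha> - 1)" using assms(2) by (simp add: power_eq_if)
  have "s div (p ^ (\<alpha> - 1) * l * t) = p * q" "s div (p ^ \<alpha> * l * t) = q"
    using assms(1,3,8) prime_gt_0_nat[OF assms(1)] by (simp_all add: assms(4) m pow ac_simps)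
  then show ?thesis
    using omega_prime_mult[OF assms(1) \<open>q > 0\<close> \<open>\<not> p dvd q\<close>] by simp
qed

lemma signed_pair_sum_cong:
  fixes s t w p k a :: nat
  assumes "prime p" "k > 0" "p \<noteq> 2 \<or> even k" "p ^ a dvd p * k"
    and omega: "omega (s div (k * t)) = Suc (omega (s div (p * k * t)))"
  shows "[(\<Sum>k'\<in>{k, p * k}.
             (-1::int) ^ omega (s div (k' * t)) * (-1::int) ^ (k' * t * w)
             * ibinom (int k' * (int t * int w - 1) - 1) (k' - 1)) = 0] (mod int p ^ (2*a))"
proof -
  define e where "e = (-1::int) ^ omega (s div (p * k * t)) * (-1::int) ^ (p * k * t * w)"
  define A where "A = ibinom (int (p * k) * (int t * int w - 1) - 1) (p * k - 1)"
  define B where "B = ibinom (int k * (int t * int w - 1) - 1) (k - 1)"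
  have "k \<noteq> p * k"
    using assms(1,2) prime_gt_1_nat by force
  moreover have "even (k * t * w) \<longleftrightarrow> even (p * k * t * w)"
    using assms(1,3) prime_odd_nat[of p] prime_ge_2_nat[of p] by auto
  ultimately have "(\<Sum>k'\<in>{k, p * k}.
             (-1::int) ^ omega (s div (k' * t)) * (-1::int) ^ (k' * t * w)
             * ibinom (int k' * (int t * int w - 1) - 1) (k' - 1)) = e * A - e * B"
    by (simp add: e_def A_def B_def omega minus_one_power_iff mult.assoc)
  moreover have "[A = B] (mod int p ^ (2*a))"
    unfolding A_def B_def by (rule ibinom_prime_mult_cong[OF assms(1-4)])
  then have "[e * A - e * B = 0] (mod int p ^ (2*a))"
    using cong_diff[OF cong_scalar_left[of A B _ e] cong_refl[of "e * B"]] by simp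
  ultimately show ?thesis by simp
qed

theorem lemma3p3:
  fixes w s t p \<alpha> :: nat
  assumes "w > 0" "s > 0" "t > 0" "t dvd s" "t \<noteq> s"
    and "prime p" "\<alpha> > 0"
    and "p ^ \<alpha> dvd s div t" "\<not> p ^ (\<alpha> + 1) dvd s div t"
    and "p \<noteq> 2 \<or> (p = 2 \<and> \<alpha> > 1)"
  shows "\<forall>l \<in> Iset (s div (p ^ \<alpha> * t)).
     [(\<Sum>k\<in>{p ^ (\<alpha> - 1) * l, p ^ \<alpha> * l}.
         (-1::int) ^ omega (s div (k * t)) * (-1::int) ^ (k * t * w)
         * ibinom (int k * (int t * int w - 1) - 1) (k - 1)) = (0::int)] (mod (int p ^ (2 * \<alpha>)))"
proof
  fix l assume l: "l \<in> Iset (s div (p ^ \<alpha> * t))"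
  obtain m where m: "s div t = p ^ \<alpha> * m"
    using assms(8) by blast
  then have s: "s = t * p ^ \<alpha> * m"
    using assms(4) by (metis dvd_mult_div_cancel mult.assoc)
  have "m > 0"
    using s assms(2) by (cases "m = 0") auto
  have "\<not> p dvd m"
    using assms(9) m by (auto simp: mult_dvd_mono)
  have "s div (p ^ \<alpha> * t) = m"
    using s assms(3) prime_gt_0_nat[OF assms(6)] by simp
  then have "l > 0" "l dvd m" using l by (auto simp: Iset_def)
  define k where "k = p ^ (\<alpha> - 1) * l"
  have pk: "p ^ \<alpha> * l = p * k"
    using assms(7) by (simp add: k_def power_eq_if)
  have pkt: "p * k * t = p ^ \<alpha> * l * t"
    by (simp add: pk)
  have "k > 0"
    using \<open>l > 0\<close> prime_gt_0_nat[OF assms(6)] by (simp add: k_def)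
  moreover have "p \<noteq> 2 \<or> even k"
    using assms(10) by (auto simp: k_def)
  moreover have "p ^ \<alpha> dvd p * k"
    by (simp flip: pk)
  moreover have "omega (s div (k * t)) = Suc (omega (s div (p * k * t)))"
    unfolding pkt
    using omega_quotient_pred_power[OF assms(6,7,3) s \<open>m > 0\<close> \<open>\<not> p dvd m\<close> \<open>l dvd m\<close> \<open>l > 0\<close>]
    by (simp only: k_def)
  ultimately show "[(\<Sum>k\<in>{p ^ (\<alpha> - 1) * l, p ^ \<alpha> * l}.
         (-1::int) ^ omega (s div (k * t)) * (-1::int) ^ (k * t * w)
         * ibinom (int k * (int t * int w - 1) - 1) (k - 1)) = 0] (mod (int p ^ (2 * \<alpha>)))"
    unfolding pk k_def[symmetric] by (rule signed_pair_sum_cong[OF assms(6)])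
qed

end
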